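(* For positive real numbers $u_1,u_2,u_3,w_1,w_2,w_3$ define $$\mathsf K(u,w)=\frac{(u_1+w_1)(u_2+w_2)(u_3+w_3)+\max\{u_1u_2u_3,\,w_1w_2w_3\}}{\sqrt{(u_2u_3+w_2w_3+u_2w_3)(u_3u_1+w_3w_1+u_3w_1)(u_1u_2+w_1w_2+u_1w_2)}}.$$ Then $\mathsf K(u,w)\ge\sqrt3$ for all such arguments, with equality when $u_1=w_1$, $u_2=w_2$, $u_3=w_3$; moreover $\mathsf K$ is unbounded above on this domain.
   Context: Equivalently, with $\rho_i=u_i/w_i>0$, $\mathsf K^2=\dfrac{\big[(1+\rho_1)(1+\rho_2)(1+\rho_3)+\max\{1,\rho_1\rho_2\rho_3\}\big]^2}{(1+\rho_2\rho_3+\rho_2)(1+\rho_3\rho_1+\rho_3)(1+\rho_1\rho_2+\rho_1)}$ and the claim is $\mathsf K^2\ge3$. *)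

theory Defs
  imports Complex_Main
begin

definition K :: "real \<Rightarrow> real \<Rightarrow> real \<Rightarrow> real \<Rightarrow> real \<Rightarrow> real \<Rightarrow> real" where
  "K u1 u2 u3 w1 w2 w3 =
     ((u1 + w1) * (u2 + w2) * (u3 + w3) + max (u1 * u2 * u3) (w1 * w2 * w3)) /
     sqrt ((u2 * u3 + w2 * w3 + u2 * w3) * (u3 * u1 + w3 * w1 + u3 * w1) * (u1 * u2 + w1 * w2 + u1 * w2))"

end

theory Submission
  imports Defs
begin

text \<open>Write \<open>X, Y, Z\<close> for the three factors under the square root, \<open>P = (u1+w1)(u2+w2)(u3+w3)\<close>,
  \<open>U = u1 u2 u3\<close> and \<open>W = w1 w2 w3\<close>. With \<open>a = w1 X\<close>, \<open>b = w2 Y\<close>, \<open>c = w3 Z\<close> one has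
  \<open>a + b + c = P + 2W - U\<close> and \<open>XYZ = ab + bc + ca + (U - W)(P + W)\<close>, so
  \<open>3(ab + bc + ca) \<le> (a + b + c)\<^sup>2\<close> yields \<open>3XYZ \<le> (P + U)\<^sup>2\<close> as soon as \<open>W \<le> U\<close>.
  The reflection \<open>(u, w) \<mapsto> (w3, w2, w1, u3, u2, u1)\<close> preserves \<open>K\<close> and swaps \<open>U\<close> and \<open>W\<close>,
  which removes that restriction. Along \<open>u = (x, 1, 1)\<close>, \<open>w = (1, x, x)\<close> the square of \<open>K\<close>
  exceeds \<open>x / 2\<close>, so \<open>K\<close> is unbounded.\<close>

lemma three_mult_sum_le_sum_square:
  fixes a b c :: "'a::linordered_idom"
  shows "3 * (a * b + b * c + c * a) \<le> (a + b + c)\<^sup>2"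
proof -
  have "0 \<le> (a - b)\<^sup>2 + (b - c)\<^sup>2 + (c - a)\<^sup>2"
    by simp
  then show ?thesis
    by (simp add: power2_eq_square algebra_simps)
qed

lemma divide_sqrt_eq_sqrt_divide:
  fixes N D :: real
  assumes "0 \<le> N"
  shows "N / sqrt D = sqrt (N\<^sup>2 / D)"
  using assms by (simp add: real_sqrt_divide)

lemma three_mult_denominator_le_square_numerator:
  fixes u1 u2 u3 w1 w2 w3 :: real
  assumes nonneg: "0 \<le> u1" "0 \<le> u2" "0 \<le> u3" "0 \<le> w1" "0 \<le> w2" "0 \<le> w3"
    and dominates: "w1 * w2 * w3 \<le> u1 * u2 * u3"
  shows "3 * ((u2 * u3 + w2 * w3 + u2 * w3) * (u3 * u1 + w3 * w1 + u3 * w1) * (u1 * u2 + w1 * w2 + u1 * w2))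
         \<le> ((u1 + w1) * (u2 + w2) * (u3 + w3) + u1 * u2 * u3)\<^sup>2"
proof -
  define X where "X = u2 * u3 + w2 * w3 + u2 * w3"
  define Y where "Y = u3 * u1 + w3 * w1 + u3 * w1"
  define Z where "Z = u1 * u2 + w1 * w2 + u1 * w2"
  define P where "P = (u1 + w1) * (u2 + w2) * (u3 + w3)"
  define U where "U = u1 * u2 * u3"
  define W where "W = w1 * w2 * w3"
  define a b c where "a = w1 * X" and "b = w2 * Y" and "c = w3 * Z"
  have sum: "a + b + c = P + 2 * W - U"
    unfolding a_def b_def c_def X_def Y_def Z_def P_def U_def W_def by algebra
  have product: "X * Y * Z = a * b + b * c + c * a + (U - W) * (P + W)"
    unfolding a_def b_def c_def X_def Y_def Z_def P_def U_def W_def by algebra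
  have excess: "0 \<le> (U - W) * (P + W)"
    using nonneg dominates unfolding P_def U_def W_def by simp
  have "3 * (X * Y * Z) \<le> (a + b + c)\<^sup>2 + 3 * ((U - W) * (P + W))"
    unfolding product using three_mult_sum_le_sum_square[of a b c] by simp
  also have "\<dots> \<le> (P + 2 * W - U)\<^sup>2 + 4 * ((U - W) * (P + W))"
    unfolding sum using excess by simp
  also have "\<dots> = (P + U)\<^sup>2"
    by algebra
  finally show ?thesis
    unfolding X_def Y_def Z_def P_def U_def by simp
qed

lemma K_reflect: "K u1 u2 u3 w1 w2 w3 = K w3 w2 w1 u3 u2 u1"
  unfolding K_def by (simp add: max.commute algebra_simps)

lemma sqrt3_le_K_if_dominates:
  fixes u1 u2 u3 w1 w2 w3 :: real
  assumes pos: "0 < u1" "0 < u2" "0 < u3" "0 < w1" "0 < w2" "0 < w3"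
    and dominates: "w1 * w2 * w3 \<le> u1 * u2 * u3"
  shows "sqrt 3 \<le> K u1 u2 u3 w1 w2 w3"
proof -
  let ?N = "(u1 + w1) * (u2 + w2) * (u3 + w3) + u1 * u2 * u3"
  let ?D = "(u2 * u3 + w2 * w3 + u2 * w3) * (u3 * u1 + w3 * w1 + u3 * w1) * (u1 * u2 + w1 * w2 + u1 * w2)"
  have "3 * ?D \<le> ?N\<^sup>2"
    using pos dominates by (intro three_mult_denominator_le_square_numerator) simp_all
  moreover have "0 < ?D"
    using pos by (intro mult_pos_pos add_pos_pos) simp_all
  ultimately have "3 \<le> ?N\<^sup>2 / ?D"
    by (simp add: pos_le_divide_eq)
  moreover have "K u1 u2 u3 w1 w2 w3 = sqrt (?N\<^sup>2 / ?D)"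
    unfolding K_def using dominates pos by (simp add: max_absorb1 divide_sqrt_eq_sqrt_divide)
  ultimately show ?thesis
    by simp
qed

lemma sqrt3_le_K:
  fixes u1 u2 u3 w1 w2 w3 :: real
  assumes "0 < u1" "0 < u2" "0 < u3" "0 < w1" "0 < w2" "0 < w3"
  shows "sqrt 3 \<le> K u1 u2 u3 w1 w2 w3"
proof (cases "w1 * w2 * w3 \<le> u1 * u2 * u3")
  case True
  then show ?thesis
    using assms by (intro sqrt3_le_K_if_dominates)
next
  case False
  then have "u3 * u2 * u1 \<le> w3 * w2 * w1"
    by (simp add: mult.commute mult.left_commute)
  then show ?thesis
    using assms sqrt3_le_K_if_dominates[of w3 w2 w1 u3 u2 u1] by (simp add: K_reflect)
qed

lemma K_diagonal:
  fixes u1 u2 u3 :: real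
  assumes "0 < u1" "0 < u2" "0 < u3"
  shows "K u1 u2 u3 u1 u2 u3 = sqrt 3"
proof -
  define U where "U = u1 * u2 * u3"
  have "0 < U"
    using assms unfolding U_def by simp
  have "K u1 u2 u3 u1 u2 u3 = sqrt ((9 * U)\<^sup>2 / (27 * U\<^sup>2))"
    unfolding K_def U_def using assms
    by (subst divide_sqrt_eq_sqrt_divide) (simp_all add: power2_eq_square algebra_simps)
  also have "\<dots> = sqrt 3"
    using \<open>0 < U\<close> by (simp add: power2_eq_square)
  finally show ?thesis .
qed

lemma sqrt_half_less_K:
  fixes x :: real
  assumes "0 < x"
  shows "sqrt (x / 2) < K x 1 1 1 x x"
proof -
  define N where "N = (x + 1) * (1 + x) * (1 + x) + max (x * 1 * 1) (1 * x * x)"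
  define D where "D = (1 * 1 + x * x + 1 * x) * (1 * x + x * 1 + 1 * 1) * (x * 1 + 1 * x + x * x)"
  have N_ge: "(x + 1) ^ 3 \<le> N"
    unfolding N_def using assms by (simp add: power3_eq_cube algebra_simps max_def)
  have N_bound: "(x + 1) ^ 6 \<le> N\<^sup>2"
    using power_mono[OF N_ge, of 2] assms by (simp add: power_mult[symmetric])
  have "2 * (x + 1) ^ 6 - x * D = 2 + 12 * x + 28 * x ^ 2 + 33 * x ^ 3 + 21 * x ^ 4 + 5 * x ^ 5"
    unfolding D_def by algebra
  also have "\<dots> > 0"
    using assms by (simp add: add_pos_nonneg)
  finally have "x * D < 2 * N\<^sup>2"
    using N_bound by linarith
  moreover have "0 < D"
    unfolding D_def using assms by (intro mult_pos_pos add_pos_pos) simp_all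
  ultimately have "x / 2 < N\<^sup>2 / D"
    by (simp add: field_simps)
  moreover have "0 \<le> N"
    using assms by (intro order_trans[OF _ N_ge]) simp
  ultimately show ?thesis
    unfolding K_def N_def[symmetric] D_def[symmetric]
    by (simp add: divide_sqrt_eq_sqrt_divide)
qed

theorem mainTheorem5:
  shows "(\<forall>u1 u2 u3 w1 w2 w3 :: real. u1 > 0 \<and> u2 > 0 \<and> u3 > 0 \<and> w1 > 0 \<and> w2 > 0 \<and> w3 > 0
            \<longrightarrow> K u1 u2 u3 w1 w2 w3 \<ge> sqrt 3)
       \<and> (\<forall>u1 u2 u3 :: real. u1 > 0 \<and> u2 > 0 \<and> u3 > 0 \<longrightarrow> K u1 u2 u3 u1 u2 u3 = sqrt 3)
       \<and> (\<forall>M :: real. \<exists>u1 u2 u3 w1 w2 w3 :: real. u1 > 0 \<and> u2 > 0 \<and> u3 > 0 \<and> w1 > 0 \<and> w2 > 0 \<and> w3 > 0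
            \<and> K u1 u2 u3 w1 w2 w3 > M)"
proof (intro conjI allI impI)
  fix M :: real
  define x where "x = 2 * (M\<^sup>2 + 1)"
  have "0 < x"
    unfolding x_def by (simp add: add_nonneg_pos)
  have "M < sqrt (x / 2)"
    unfolding x_def by (intro real_less_rsqrt) simp
  also have "\<dots> < K x 1 1 1 x x"
    using \<open>0 < x\<close> by (rule sqrt_half_less_K)
  finally show "\<exists>u1 u2 u3 w1 w2 w3. u1 > 0 \<and> u2 > 0 \<and> u3 > 0 \<and> w1 > 0 \<and> w2 > 0 \<and> w3 > 0
      \<and> K u1 u2 u3 w1 w2 w3 > M"
    using \<open>0 < x\<close> zero_less_one by blast
qed (use sqrt3_le_K K_diagonal in auto)

end
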